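(* Let $r\ge 1$, let $M=(v_1,\dots,v_n)$ be a finite list of nonzero vectors generating $\mathbb{F}_2^r$, let $G=G(\mathbb{F}_2^r,M)$, and let $\lambda_u=n-\sum_{i=1}^n(-1)^{u\cdot v_i}$ for $u\in\mathbb{F}_2^r$. For $1\le j\le r$, the additive order of the class of $x_j-1$ in $$R(G)=\mathbb{Z}[x_1,\dots,x_r]\Big/\Big(x_1^2-1,\dots,x_r^2-1,\ n-\sum_{i=1}^n\prod_{k=1}^r x_k^{(v_i)_k}\Big)$$ equals the minimum positive integer $C$ such that for every $v\in\mathbb{F}_2^r$, $$\frac{C}{2^{r-2}}\sum_{\substack{u\in\mathbb{F}_2^r:\ u\cdot v=1,\ u_j=1}}\frac{1}{\lambda_u}\in\mathbb{Z}.$$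
   Context: The Cayley graph $G$ has vertex set $\mathbb{F}_2^r$ and Laplacian $L(G)$ indexed by $\mathbb{F}_2^r$ with $L(G)_{u,u}=n$ and $L(G)_{u,w}=-\#\{i:u+v_i=w\}$ for $u\ne w$. The $\lambda_u$ are the eigenvalues of $L(G)$, and $\lambda_u>0$ for $u\neq 0$. As abelian groups, $R(G)\cong\operatorname{coker}L(G)$ via identifying the monomial $\prod_k x_k^{w_k}$ ($w\in\mathbb{F}_2^r$) with the standard basis vector $e_w\in\mathbb{Z}^{2^r}$; the class of $x_j-1$ has finite additive order. *)

theory Defs
  imports Complex_Main
begin

text \<open>Vectors of F_2^r are modelled as boolean lists of length r (True = 1).
  Coordinate k (1-based, as in the paper) is list position k-1.\<close>

definition vecs :: "nat \<Rightarrow> bool list set" where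
  "vecs r = {u. length u = r}"

definition zerov :: "nat \<Rightarrow> bool list" where
  "zerov r = replicate r False"

definition vadd :: "bool list \<Rightarrow> bool list \<Rightarrow> bool list" where
  "vadd u v = map2 (\<noteq>) u v"

definition dot :: "bool list \<Rightarrow> bool list \<Rightarrow> bool" where
  "dot u v = odd (card {i. i < length u \<and> u ! i \<and> v ! i})"

inductive_set f2span :: "nat \<Rightarrow> bool list list \<Rightarrow> bool list set" for r M where
  zero: "zerov r \<in> f2span r M"
| step: "x \<in> f2span r M \<Longrightarrow> v \<in> set M \<Longrightarrow> vadd v x \<in> f2span r M"

definition lam :: "bool list list \<Rightarrow> bool list \<Rightarrow> real" where
  "lam M u = real (length M) - (\<Sum>i<length M. if dot u (M ! i) then -1 else 1)"

text \<open>The ring Z[x_1..x_r]/(x_1^2-1,...,x_r^2-1) is the group ring Z[F_2^r]: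
  the monomial prod_k x_k^(w_k) corresponds to the basis element delta_w.
  Elements are functions bool list => int (only values on vecs r matter).\<close>

definition delta :: "bool list \<Rightarrow> bool list \<Rightarrow> int" where
  "delta a w = (if w = a then 1 else 0)"

definition gr_mult :: "nat \<Rightarrow> (bool list \<Rightarrow> int) \<Rightarrow> (bool list \<Rightarrow> int) \<Rightarrow> bool list \<Rightarrow> int" where
  "gr_mult r f g w = (\<Sum>u\<in>vecs r. f u * g (vadd w u))"

definition relel :: "nat \<Rightarrow> bool list list \<Rightarrow> bool list \<Rightarrow> int" where
  "relel r M w = int (length M) * delta (zerov r) w - (\<Sum>i<length M. delta (M ! i) w)"

definition in_RG_ideal :: "nat \<Rightarrow> bool list list \<Rightarrow> (bool list \<Rightarrow> int) \<Rightarrow> bool" where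
  "in_RG_ideal r M a \<longleftrightarrow> (\<exists>f. \<forall>w\<in>vecs r. a w = gr_mult r f (relel r M) w)"

definition RG_add_order :: "nat \<Rightarrow> bool list list \<Rightarrow> (bool list \<Rightarrow> int) \<Rightarrow> nat" where
  "RG_add_order r M a = (LEAST C::nat. C > 0 \<and> in_RG_ideal r M (\<lambda>w. int C * a w))"

definition unitv :: "nat \<Rightarrow> nat \<Rightarrow> bool list" where
  "unitv r j = map (\<lambda>i. i = j - 1) [0..<r]"

definition xj_minus_1 :: "nat \<Rightarrow> nat \<Rightarrow> bool list \<Rightarrow> int" where
  "xj_minus_1 r j w = delta (unitv r j) w - delta (zerov r) w"

definition integral_cond :: "nat \<Rightarrow> bool list list \<Rightarrow> nat \<Rightarrow> nat \<Rightarrow> bool" where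
  "integral_cond r M j C \<longleftrightarrow>
     (\<forall>v\<in>vecs r. real C / 2 powr (real r - 2) *
        (\<Sum>u\<in>{u\<in>vecs r. dot u v \<and> u ! (j - 1)}. 1 / lam M u) \<in> \<int>)"

end

theory Submission imports Defs begin

text \<open>In the group ring Z[F_2^r], multiplication by the relation element is the Laplacian
  L f (w) = n f(w) - sum_i f(w + v_i) of the Cayley graph, so C (x_j - 1) lies in the ideal
  iff C (delta_{e_j} - delta_0) = L f for an integer-valued f. The characters
  chi_u(w) = (-1)^(u.w) are eigenfunctions of L with eigenvalues lambda_u, which yields the
  real solution g(v) = C / 2^(r-2) * sum_{u.v = 1, u_j = 1} 1 / lambda_u. As the graph is
  connected, harmonic functions are constant by the maximum principle, so every solution is
  g plus a constant; since g(0) = 0, an integer-valued solution exists iff g takes integer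
  values. Finally C = 2^r prod_{u_j = 1} lambda_u clears all denominators.\<close>

lemma finite_vecs [simp]: "finite (vecs r)"
  using finite_lists_length_eq[of "UNIV :: bool set" r] by (simp add: vecs_def)

lemma card_vecs: "card (vecs r) = 2 ^ r"
  using card_lists_length_eq[of "UNIV :: bool set" r] by (simp add: vecs_def)

lemma zerov_in_vecs [simp]: "zerov r \<in> vecs r"
  by (simp add: zerov_def vecs_def)

lemma unitv_in_vecs [simp]: "unitv r j \<in> vecs r"
  by (simp add: unitv_def vecs_def)

lemma length_vadd [simp]: "length (vadd u v) = min (length u) (length v)"
  by (simp add: vadd_def)

lemma nth_vadd [simp]: "i < length u \<Longrightarrow> i < length v \<Longrightarrow> vadd u v ! i = (u ! i \<noteq> v ! i)"
  by (simp add: vadd_def)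

lemma vadd_in_vecs: "u \<in> vecs r \<Longrightarrow> v \<in> vecs r \<Longrightarrow> vadd u v \<in> vecs r"
  by (simp add: vecs_def)

lemma vadd_commute: "length u = length v \<Longrightarrow> vadd u v = vadd v u"
  by (rule nth_equalityI) auto

lemma vadd_assoc:
  "length u = length v \<Longrightarrow> length v = length w \<Longrightarrow> vadd (vadd u v) w = vadd u (vadd v w)"
  by (rule nth_equalityI) auto

lemma vadd_zerov_left: "length u = r \<Longrightarrow> vadd (zerov r) u = u"
  by (rule nth_equalityI) (auto simp: zerov_def)

lemma vadd_zerov_right: "length u = r \<Longrightarrow> vadd u (zerov r) = u"
  by (rule nth_equalityI) (auto simp: zerov_def)

lemma vadd_self: "vadd u u = zerov (length u)"
  by (rule nth_equalityI) (auto simp: zerov_def)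

lemma vadd_vadd_cancel: "length u = length w \<Longrightarrow> vadd w (vadd w u) = u"
  by (rule nth_equalityI) auto

lemma vadd_eq_zerov_iff: "length u = r \<Longrightarrow> length w = r \<Longrightarrow> vadd u w = zerov r \<longleftrightarrow> u = w"
  by (metis vadd_self vadd_vadd_cancel vadd_zerov_right)

lemma ex_nth_if_neq_zerov:
  assumes "u \<in> vecs r" and "u \<noteq> zerov r"
  obtains i where "i < r" and "u ! i"
proof -
  have "length u = r" using assms(1) by (simp add: vecs_def)
  with assms(2) have "\<exists>i<r. u ! i"
    by (metis (full_types) nth_equalityI nth_replicate length_replicate zerov_def)
  then show ?thesis using that by blast
qed

lemma card_Collect_less_Suc:
  "card {i. i < Suc n \<and> P i} = card {i. i < n \<and> P i} + (if P n then 1 else 0)"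
proof (cases "P n")
  case True
  then have "{i. i < Suc n \<and> P i} = insert n {i. i < n \<and> P i}" by auto
  then show ?thesis using True by simp
next
  case False
  then have "{i. i < Suc n \<and> P i} = {i. i < n \<and> P i}" using less_Suc_eq by auto
  then show ?thesis using False by simp
qed

lemma odd_card_neq:
  "odd (card {i. i < (n::nat) \<and> P i \<noteq> Q i}) \<longleftrightarrow>
   odd (card {i. i < n \<and> P i}) \<noteq> odd (card {i. i < n \<and> Q i})"
  by (induction n) (auto simp: card_Collect_less_Suc)

lemma dot_commute: "length u = length v \<Longrightarrow> dot u v = dot v u"
  unfolding dot_def by (metis (no_types, lifting) Collect_cong)

lemma dot_vadd_right:
  assumes "length u = r" and "length v = r" and "length w = r"
  shows "dot u (vadd v w) \<longleftrightarrow> dot u v \<noteq> dot u w"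
proof -
  have "{i. i < length u \<and> u ! i \<and> vadd v w ! i} = {i. i < r \<and> (u ! i \<and> v ! i) \<noteq> (u ! i \<and> w ! i)}"
    using assms by auto
  then show ?thesis
    using assms odd_card_neq[of r "\<lambda>i. u ! i \<and> v ! i" "\<lambda>i. u ! i \<and> w ! i"] by (simp add: dot_def)
qed

lemma dot_zerov_right [simp]:
  assumes "length u = r"
  shows "\<not> dot u (zerov r)"
proof -
  have no_common: "{i. i < length u \<and> u ! i \<and> zerov r ! i} = {}"
    using assms by (auto simp: zerov_def)
  show ?thesis unfolding dot_def no_common by simp
qed

lemma dot_unitv_right:
  assumes "length u = r" and "1 \<le> j" and "j \<le> r"
  shows "dot u (unitv r j) = u ! (j - 1)"
proof -
  have "{i. i < length u \<and> u ! i \<and> unitv r j ! i} = (if u ! (j - 1) then {j - 1} else {})"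
    using assms by (auto simp: unitv_def)
  then show ?thesis by (simp add: dot_def)
qed

definition chi :: "bool list \<Rightarrow> bool list \<Rightarrow> real" where
  "chi u w = (if dot u w then -1 else 1)"

lemma chi_vadd_right:
  "length u = r \<Longrightarrow> length v = r \<Longrightarrow> length w = r \<Longrightarrow> chi u (vadd v w) = chi u v * chi u w"
  by (simp add: chi_def dot_vadd_right)

lemma sum_chi_vecs:
  assumes "w \<in> vecs r"
  shows "(\<Sum>u\<in>vecs r. chi u w) = (if w = zerov r then 2 ^ r else 0)"
proof (cases "w = zerov r")
  case True
  have "\<forall>u\<in>vecs r. chi u (zerov r) = 1" by (simp add: chi_def vecs_def)
  then show ?thesis using True by (simp add: card_vecs)
next
  case False
  have lw: "length w = r" using assms by (simp add: vecs_def)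
  obtain i where "i < r" and "w ! i" using ex_nth_if_neq_zerov[OF assms False] .
  define e where "e = unitv r (Suc i)"
  have "dot w e" using \<open>i < r\<close> \<open>w ! i\<close> lw by (simp add: e_def dot_unitv_right)
  have e: "e \<in> vecs r" by (simp add: e_def)
  have flip: "chi (vadd e u) w = - chi u w" if "u \<in> vecs r" for u
  proof -
    have "dot (vadd e u) w = dot w (vadd e u)"
      using that e lw by (intro dot_commute) (simp add: vecs_def)
    also have "\<dots> = (\<not> dot u w)"
      using that e lw \<open>dot w e\<close> dot_commute[of u w] by (simp add: dot_vadd_right vecs_def)
    finally show ?thesis by (simp add: chi_def)
  qed
  have "(\<Sum>u\<in>vecs r. - chi u w) = (\<Sum>u\<in>vecs r. chi u w)"
    by (rule sum.reindex_bij_witness[where i="vadd e" and j="vadd e"])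
      (use e in \<open>auto simp: flip vadd_in_vecs vadd_vadd_cancel vecs_def\<close>)
  then show ?thesis using False by (simp add: sum_negf)
qed

lemma sum_chi_coordinate:
  assumes "w \<in> vecs r" and "1 \<le> j" and "j \<le> r"
  shows "(\<Sum>u\<in>{u\<in>vecs r. u ! (j - 1)}. chi u w) = 2 ^ r / 2 * - of_int (xj_minus_1 r j w)"
proof -
  define e where "e = unitv r j"
  have e: "e \<in> vecs r" by (simp add: e_def)
  have "(\<Sum>u\<in>{u\<in>vecs r. u ! (j - 1)}. chi u w) = (\<Sum>u\<in>vecs r. if u ! (j - 1) then chi u w else 0)"
    by (simp add: sum.inter_filter)
  also have "\<dots> = (\<Sum>u\<in>vecs r. (chi u w - chi u (vadd e w)) / 2)"
  proof (rule sum.cong [OF refl])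
    fix u assume "u \<in> vecs r"
    then have "chi u (vadd e w) = (if u ! (j - 1) then -1 else 1) * chi u w"
      using assms e chi_vadd_right[of u r e w] dot_unitv_right[of u r j]
      by (simp add: vecs_def chi_def e_def)
    then show "(if u ! (j - 1) then chi u w else 0) = (chi u w - chi u (vadd e w)) / 2"
      by simp
  qed
  also have "\<dots> = ((\<Sum>u\<in>vecs r. chi u w) - (\<Sum>u\<in>vecs r. chi u (vadd e w))) / 2"
    by (simp add: sum_divide_distrib [symmetric] sum_subtractf)
  also have "\<dots> = ((if w = zerov r then 2 ^ r else 0) - (if w = e then 2 ^ r else 0)) / 2"
  proof -
    have "vadd e w = zerov r \<longleftrightarrow> w = e"
      using assms(1) e by (auto simp: vadd_eq_zerov_iff vecs_def)
    then show ?thesis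
      using assms(1) e by (simp add: sum_chi_vecs vadd_in_vecs)
  qed
  finally show ?thesis by (simp add: xj_minus_1_def delta_def e_def)
qed

definition laplacian :: "bool list list \<Rightarrow> (bool list \<Rightarrow> 'a::comm_ring_1) \<Rightarrow> bool list \<Rightarrow> 'a" where
  "laplacian M g w = of_nat (length M) * g w - (\<Sum>i<length M. g (vadd w (M ! i)))"

lemma laplacian_const: "laplacian M (\<lambda>_. c) w = 0"
  by (simp add: laplacian_def)

lemma laplacian_diff: "laplacian M (\<lambda>v. g v - h v) w = laplacian M g w - laplacian M h w"
  by (simp add: laplacian_def sum_subtractf algebra_simps)

lemma laplacian_mult_left: "laplacian M (\<lambda>v. c * g v) w = c * laplacian M g w"
  by (simp add: laplacian_def sum_distrib_left algebra_simps)

lemma laplacian_sum: "laplacian M (\<lambda>v. \<Sum>u\<in>U. g u v) w = (\<Sum>u\<in>U. laplacian M (g u) w)"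
  by (simp add: laplacian_def sum_subtractf sum_distrib_left sum.swap [of _ U])

lemma of_int_laplacian: "of_int (laplacian M g w) = laplacian M (\<lambda>v. of_int (g v)) w"
  by (simp add: laplacian_def)

lemma laplacian_cong:
  assumes "\<forall>v\<in>set M. v \<in> vecs r" and "w \<in> vecs r" and "\<forall>v\<in>vecs r. g v = h v"
  shows "laplacian M g w = laplacian M h w"
  using assms by (simp add: laplacian_def vadd_in_vecs)

lemma gr_mult_reindex:
  assumes "w \<in> vecs r"
  shows "gr_mult r f g w = (\<Sum>x\<in>vecs r. f (vadd w x) * g x)"
  unfolding gr_mult_def
  by (rule sum.reindex_bij_witness [where i="vadd w" and j="vadd w"])
    (use assms in \<open>auto simp: vadd_in_vecs vadd_vadd_cancel vecs_def\<close>)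

lemma sum_vecs_mult_delta:
  assumes "a \<in> vecs r"
  shows "(\<Sum>x\<in>vecs r. h x * delta a x) = h a"
proof -
  have delta_eq: "(\<lambda>x. h x * delta a x) = (\<lambda>x. if x = a then h a else 0)"
    by (auto simp: delta_def)
  show ?thesis unfolding delta_eq using assms by simp
qed

lemma gr_mult_relel:
  assumes M: "\<forall>v\<in>set M. v \<in> vecs r" and w: "w \<in> vecs r"
  shows "gr_mult r f (relel r M) w = laplacian M f w"
proof -
  have "gr_mult r f (relel r M) w =
      int (length M) * (\<Sum>x\<in>vecs r. f (vadd w x) * delta (zerov r) x)
      - (\<Sum>i<length M. \<Sum>x\<in>vecs r. f (vadd w x) * delta (M ! i) x)"
    by (simp add: gr_mult_reindex [OF w] relel_def algebra_simps sum_subtractf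
        sum_distrib_left sum.swap [of _ "vecs r"])
  also have "\<dots> = laplacian M f w"
  proof -
    have "vadd w (zerov r) = w" using w by (simp add: vadd_zerov_right vecs_def)
    moreover have "M ! i \<in> vecs r" if "i < length M" for i using M that by simp
    ultimately show ?thesis by (simp add: sum_vecs_mult_delta laplacian_def)
  qed
  finally show ?thesis .
qed

lemma lam_eq_chi: "lam M u = real (length M) - (\<Sum>i<length M. chi u (M ! i))"
  by (simp add: lam_def chi_def)

lemma lam_eq_card: "lam M u = 2 * real (card {i. i < length M \<and> dot u (M ! i)})"
proof -
  have "lam M u = (\<Sum>i<length M. 1 - (if dot u (M ! i) then -1 else 1))"
    by (simp add: lam_def sum_subtractf)
  also have "\<dots> = (\<Sum>i<length M. if dot u (M ! i) then 2 else 0)"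
    by (rule sum.cong) auto
  finally have "lam M u = (\<Sum>i<length M. if dot u (M ! i) then 2 else 0)" .
  then show ?thesis
    by (simp add: sum.If_cases lessThan_def Collect_conj_eq Int_commute)
qed

lemma laplacian_chi:
  assumes "\<forall>v\<in>set M. v \<in> vecs r" and "u \<in> vecs r" and "w \<in> vecs r"
  shows "laplacian M (chi u) w = lam M u * chi u w"
proof -
  have "chi u (vadd w (M ! i)) = chi u w * chi u (M ! i)" if "i < length M" for i
    using that assms by (simp add: chi_vadd_right vecs_def)
  then show ?thesis
    by (simp add: laplacian_def lam_eq_chi sum_distrib_left algebra_simps)
qed

lemma f2span_subset_vecs: "\<forall>v\<in>set M. v \<in> vecs r \<Longrightarrow> f2span r M \<subseteq> vecs r"
proof
  fix x assume "x \<in> f2span r M" and "\<forall>v\<in>set M. v \<in> vecs r"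
  then show "x \<in> vecs r" by induction (auto intro: vadd_in_vecs)
qed

lemma not_dot_f2span:
  assumes M: "\<forall>v\<in>set M. v \<in> vecs r \<and> \<not> dot u v" and u: "length u = r"
    and x: "x \<in> f2span r M"
  shows "\<not> dot u x"
  using x
proof induction
  case zero
  show ?case using u by simp
next
  case (step x v)
  then have "x \<in> vecs r" using M f2span_subset_vecs by blast
  with step M u show ?case by (simp add: dot_vadd_right vecs_def)
qed

lemma lam_pos:
  assumes M: "\<forall>v\<in>set M. v \<in> vecs r" and span: "f2span r M = vecs r"
    and u: "u \<in> vecs r" and "u \<noteq> zerov r"
  shows "lam M u > 0"
proof -
  obtain k where "k < r" and "u ! k" using ex_nth_if_neq_zerov [OF u \<open>u \<noteq> zerov r\<close>] .
  with u have "dot u (unitv r (Suc k))" by (simp add: dot_unitv_right vecs_def)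
  moreover have "unitv r (Suc k) \<in> f2span r M" using span by simp
  ultimately obtain v where "v \<in> set M" and "dot u v"
    using M u not_dot_f2span [of M r u] by (auto simp: vecs_def)
  then obtain i where "i < length M" and "dot u (M ! i)" by (metis in_set_conv_nth)
  then have "card {i. i < length M \<and> dot u (M ! i)} > 0" by (auto simp: card_gt_0_iff)
  then show ?thesis by (simp add: lam_eq_card)
qed

lemma harmonic_max_neighbour:
  fixes h :: "bool list \<Rightarrow> 'a::linordered_idom"
  assumes M: "\<forall>v\<in>set M. v \<in> vecs r" and y: "y \<in> vecs r"
    and max: "\<forall>x\<in>vecs r. h x \<le> h y" and harmonic: "laplacian M h y = 0"
    and v: "v \<in> set M"
  shows "h (vadd y v) = h y"
proof -
  have "(\<Sum>i<length M. h y - h (vadd y (M ! i))) = 0"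
    using harmonic by (simp add: laplacian_def sum_subtractf)
  moreover have "\<forall>i\<in>{..<length M}. 0 \<le> h y - h (vadd y (M ! i))"
    using max M y by (simp add: vadd_in_vecs)
  ultimately have "\<forall>i<length M. h (vadd y (M ! i)) = h y"
    using sum_nonneg_eq_0_iff [of "{..<length M}" "\<lambda>i. h y - h (vadd y (M ! i))"] by simp
  then show ?thesis using v by (metis in_set_conv_nth)
qed

text \<open>Maximum principle: the maximum propagates along the edges of the Cayley graph, which is
  connected because M spans.\<close>
lemma harmonic_imp_constant:
  fixes h :: "bool list \<Rightarrow> 'a::linordered_idom"
  assumes M: "\<forall>v\<in>set M. v \<in> vecs r" and span: "f2span r M = vecs r"
    and harmonic: "\<forall>w\<in>vecs r. laplacian M h w = 0" and w: "w \<in> vecs r"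
  shows "h w = h (zerov r)"
proof -
  have "Max (h ` vecs r) \<in> h ` vecs r" using w by (intro Max_in) auto
  then obtain y where y: "y \<in> vecs r" and "h y = Max (h ` vecs r)" by (metis imageE)
  then have max: "\<forall>x\<in>vecs r. h x \<le> h y" by simp
  have on_span: "h (vadd x y) = h y" if "x \<in> f2span r M" for x
    using that
  proof induction
    case zero
    show ?case using y by (simp add: vadd_zerov_left vecs_def)
  next
    case (step x v)
    have x: "x \<in> vecs r" using step.hyps(1) M f2span_subset_vecs by blast
    have v: "v \<in> vecs r" using step.hyps(2) M by blast
    have xy: "vadd x y \<in> vecs r" using x y by (rule vadd_in_vecs)
    have "vadd (vadd v x) y = vadd (vadd x y) v"
      using x y v by (simp add: vecs_def vadd_assoc vadd_commute [of v])
    also have "h \<dots> = h (vadd x y)"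
      by (rule harmonic_max_neighbour [OF M xy _ _ step.hyps(2)]) (use max harmonic xy step.IH in auto)
    finally show ?case using step.IH by simp
  qed
  have "h w = h y"
    using on_span [of "vadd w y"] span w y
    by (simp add: vadd_in_vecs vadd_assoc vadd_self vadd_zerov_right vecs_def)
  moreover have "h (zerov r) = h y"
    using on_span [of y] span y by (simp add: vadd_self vecs_def)
  ultimately show ?thesis by simp
qed

lemma in_RG_ideal_iff_Ints:
  fixes g :: "bool list \<Rightarrow> real"
  assumes M: "\<forall>v\<in>set M. v \<in> vecs r" and span: "f2span r M = vecs r"
    and g: "\<forall>w\<in>vecs r. laplacian M g w = of_int (a w)"
  shows "in_RG_ideal r M a \<longleftrightarrow> (\<forall>v\<in>vecs r. g v - g (zerov r) \<in> \<int>)"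
proof
  assume "in_RG_ideal r M a"
  then obtain f where f: "\<forall>w\<in>vecs r. a w = laplacian M f w"
    using gr_mult_relel [OF M] by (auto simp: in_RG_ideal_def)
  have "\<forall>w\<in>vecs r. laplacian M (\<lambda>v. of_int (f v) - g v) w = 0"
    using f g by (simp add: laplacian_diff of_int_laplacian)
  then have const: "of_int (f v) - g v = of_int (f (zerov r)) - g (zerov r)" if "v \<in> vecs r" for v
    using harmonic_imp_constant [OF M span _ that, where h="\<lambda>v. of_int (f v) - g v"] by blast
  have "g v - g (zerov r) = of_int (f v - f (zerov r))" if "v \<in> vecs r" for v
    using const [OF that] by simp
  then show "\<forall>v\<in>vecs r. g v - g (zerov r) \<in> \<int>" by simp
next
  assume ints: "\<forall>v\<in>vecs r. g v - g (zerov r) \<in> \<int>"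
  define f where "f v = \<lfloor>g v - g (zerov r)\<rfloor>" for v
  have f: "\<forall>v\<in>vecs r. of_int (f v) = g v - g (zerov r)"
    using ints by (auto simp: f_def elim!: Ints_cases)
  have "a w = gr_mult r f (relel r M) w" if w: "w \<in> vecs r" for w
  proof -
    have "real_of_int (laplacian M f w) = laplacian M (\<lambda>v. g v - g (zerov r)) w"
      unfolding of_int_laplacian using M w f by (rule laplacian_cong)
    also have "\<dots> = of_int (a w)"
      using g w by (simp add: laplacian_diff laplacian_const)
    finally show ?thesis using gr_mult_relel [OF M w] by simp
  qed
  then show "in_RG_ideal r M a" by (auto simp: in_RG_ideal_def)
qed

definition lam_inv_sum :: "nat \<Rightarrow> bool list list \<Rightarrow> nat \<Rightarrow> bool list \<Rightarrow> real" where
  "lam_inv_sum r M j v = (\<Sum>u\<in>{u\<in>vecs r. dot u v \<and> u ! (j - 1)}. 1 / lam M u)"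

lemma lam_inv_sum_zerov: "lam_inv_sum r M j (zerov r) = 0"
proof -
  have no_terms: "{u\<in>vecs r. dot u (zerov r) \<and> u ! (j - 1)} = {}" by (auto simp: vecs_def)
  show ?thesis unfolding lam_inv_sum_def no_terms by simp
qed

lemma lam_inv_sum_eq_chi:
  "lam_inv_sum r M j v = (\<Sum>u\<in>{u\<in>vecs r. u ! (j - 1)}. 1 / (2 * lam M u) * (1 - chi u v))"
proof -
  have terms: "{u\<in>vecs r. dot u v \<and> u ! (j - 1)} = {u\<in>{u\<in>vecs r. u ! (j - 1)}. dot u v}"
    by auto
  have "lam_inv_sum r M j v = (\<Sum>u\<in>{u\<in>vecs r. u ! (j - 1)}. if dot u v then 1 / lam M u else 0)"
    unfolding lam_inv_sum_def terms by (rule sum.inter_filter) simp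
  also have "\<dots> = (\<Sum>u\<in>{u\<in>vecs r. u ! (j - 1)}. 1 / (2 * lam M u) * (1 - chi u v))"
    by (rule sum.cong) (auto simp: chi_def)
  finally show ?thesis .
qed

lemma laplacian_lam_inv_sum:
  assumes M: "\<forall>v\<in>set M. v \<in> vecs r" and span: "f2span r M = vecs r"
    and w: "w \<in> vecs r" and j: "1 \<le> j" "j \<le> r"
  shows "laplacian M (lam_inv_sum r M j) w = 2 ^ r / 4 * of_int (xj_minus_1 r j w)"
proof -
  define U where "U = {u\<in>vecs r. u ! (j - 1)}"
  have "zerov r ! (j - 1) = False" using j by (simp add: zerov_def)
  then have lam_U: "lam M u > 0" if "u \<in> U" for u
    using that lam_pos [OF M span, of u] by (auto simp: U_def)
  have "lam_inv_sum r M j = (\<lambda>v. \<Sum>u\<in>U. 1 / (2 * lam M u) * (1 - chi u v))"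
    by (rule ext) (simp add: lam_inv_sum_eq_chi U_def)
  then have "laplacian M (lam_inv_sum r M j) w =
      (\<Sum>u\<in>U. 1 / (2 * lam M u) * (laplacian M (\<lambda>_. 1) w - laplacian M (chi u) w))"
    by (simp only: laplacian_sum laplacian_mult_left laplacian_diff)
  also have "\<dots> = (\<Sum>u\<in>U. - chi u w / 2)"
  proof (rule sum.cong [OF refl])
    fix u assume "u \<in> U"
    then have "u \<in> vecs r" and "lam M u > 0" using lam_U by (auto simp: U_def)
    with M w show "1 / (2 * lam M u) * (laplacian M (\<lambda>_. 1) w - laplacian M (chi u) w) = - chi u w / 2"
      by (simp add: laplacian_const laplacian_chi)
  qed
  also have "\<dots> = - (\<Sum>u\<in>U. chi u w) / 2"
    by (simp add: sum_divide_distrib sum_negf)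
  also have "\<dots> = 2 ^ r / 4 * of_int (xj_minus_1 r j w)"
    using sum_chi_coordinate [OF w j] by (simp add: U_def)
  finally show ?thesis .
qed

lemma two_powr_minus_two: "(2::real) powr (real r - 2) = 2 ^ r / 4"
  by (simp add: powr_diff powr_realpow)

lemma in_RG_ideal_xj_minus_1_iff:
  assumes M: "\<forall>v\<in>set M. v \<in> vecs r" and span: "f2span r M = vecs r"
    and j: "1 \<le> j" "j \<le> r"
  shows "in_RG_ideal r M (\<lambda>w. int C * xj_minus_1 r j w) \<longleftrightarrow> integral_cond r M j C"
proof -
  define c where "c = real C / 2 powr (real r - 2)"
  define g where "g v = c * lam_inv_sum r M j v" for v
  have "c * (2 ^ r / 4) = real C" by (simp add: c_def two_powr_minus_two)
  then have "\<forall>w\<in>vecs r. laplacian M g w = of_int (int C * xj_minus_1 r j w)"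
    using M span j unfolding g_def by (simp add: laplacian_mult_left laplacian_lam_inv_sum)
  then have "in_RG_ideal r M (\<lambda>w. int C * xj_minus_1 r j w) \<longleftrightarrow>
      (\<forall>v\<in>vecs r. g v - g (zerov r) \<in> \<int>)"
    by (rule in_RG_ideal_iff_Ints [OF M span])
  also have "\<dots> \<longleftrightarrow> (\<forall>v\<in>vecs r. g v \<in> \<int>)"
    by (simp add: g_def lam_inv_sum_zerov)
  also have "\<dots> \<longleftrightarrow> integral_cond r M j C"
    by (simp add: g_def c_def integral_cond_def lam_inv_sum_def)
  finally show ?thesis .
qed

lemma integral_cond_exists:
  assumes M: "\<forall>v\<in>set M. v \<in> vecs r" and span: "f2span r M = vecs r"
    and j: "1 \<le> j" "j \<le> r"
  shows "\<exists>C>0. integral_cond r M j C"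
proof -
  define U where "U = {u\<in>vecs r. u ! (j - 1)}"
  define deg where "deg u = 2 * card {i. i < length M \<and> dot u (M ! i)}" for u
  define C where "C = 2 ^ r * (\<Prod>u\<in>U. deg u)"
  have lam_deg: "lam M u = real (deg u)" for u by (simp add: deg_def lam_eq_card)
  have "zerov r ! (j - 1) = False" using j by (simp add: zerov_def)
  then have deg_pos: "deg u > 0" if "u \<in> U" for u
    using that lam_pos [OF M span, of u] by (auto simp: U_def lam_deg)
  then have "C > 0" by (simp add: C_def U_def)
  moreover have "integral_cond r M j C"
    unfolding integral_cond_def
  proof
    fix v assume "v \<in> vecs r"
    define V where "V = {u\<in>vecs r. dot u v \<and> u ! (j - 1)}"
    have "V \<subseteq> U" by (auto simp: U_def V_def)
    have "real C / 2 powr (real r - 2) * (\<Sum>u\<in>V. 1 / lam M u)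
        = 4 * (\<Sum>u\<in>V. real (\<Prod>x\<in>U. deg x) / deg u)"
      by (simp add: C_def two_powr_minus_two lam_deg sum_distrib_left mult_ac)
    also have "\<dots> = 4 * (\<Sum>u\<in>V. real (\<Prod>x\<in>U - {u}. deg x))"
    proof -
      have "real (\<Prod>x\<in>U. deg x) / deg u = real (\<Prod>x\<in>U - {u}. deg x)" if "u \<in> V" for u
      proof -
        have "u \<in> U" using that \<open>V \<subseteq> U\<close> by blast
        then have "(\<Prod>x\<in>U. deg x) = deg u * (\<Prod>x\<in>U - {u}. deg x)"
          by (simp add: U_def prod.remove)
        then show ?thesis using deg_pos [OF \<open>u \<in> U\<close>] by simp
      qed
      then show ?thesis by simp
    qed
    also have "\<dots> \<in> \<int>" by (intro Ints_mult Ints_sum Ints_of_nat) auto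
    finally show "real C / 2 powr (real r - 2) * (\<Sum>u\<in>V. 1 / lam M u) \<in> \<int>" .
  qed
  ultimately show ?thesis by blast
qed

theorem mainTheorem8:
  fixes r j :: nat and M :: "bool list list"
  assumes "r \<ge> 1"
    and "\<forall>v\<in>set M. v \<in> vecs r \<and> v \<noteq> zerov r"
    and "f2span r M = vecs r"
    and "1 \<le> j" and "j \<le> r"
  shows "(\<exists>C>0. integral_cond r M j C) \<and>
         RG_add_order r M (xj_minus_1 r j) = (LEAST C::nat. C > 0 \<and> integral_cond r M j C)"
proof
  have M: "\<forall>v\<in>set M. v \<in> vecs r" using assms(2) by blast
  show "\<exists>C>0. integral_cond r M j C"
    using integral_cond_exists [OF M assms(3-5)] .
  show "RG_add_order r M (xj_minus_1 r j) = (LEAST C::nat. C > 0 \<and> integral_cond r M j C)"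
    unfolding RG_add_order_def using in_RG_ideal_xj_minus_1_iff [OF M assms(3-5)] by simp
qed

end
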